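(* Let $\psi_{i,j}\ge 0$ for bidders $i\in[n]$ ($n\ge 2$) and types $j\in[m]$. Define $\mathcal{B}=\min_{i'}\sum_j\max_{i\ne i'}\psi_{i,j}$ and $\tilde{\mathcal{B}}=\sum_j\max_{i\ne i^*}\psi_{i,j}$, where $i^*=\arg\max_i\sum_{j\in d(i)}\psi_{i,j}$. Then $\tilde{\mathcal{B}}/2\le\mathcal{B}\le\tilde{\mathcal{B}}$.
   Context: Here $\psi_{i,j}=p_jv_{i,j}$ in a probabilistic single-item auction (type probabilities $p_j$, valuations $v_{i,j}$). For a type $j$, $w_1(j)$ is the bidder maximizing $\psi_{i,j}$ (ties broken by a fixed priority order on bidders), and $d(i)=\{j: w_1(j)=i\}$. Ties in the choice of $i^*$ are broken arbitrarily. *)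

theory Defs
  imports Complex_Main
begin

text \<open>The fixed priority order on bidders is given by an injective rank function:
  among tied maximizers, the one with the smallest rank wins.\<close>

definition w1 :: "(nat \<Rightarrow> nat) \<Rightarrow> nat \<Rightarrow> (nat \<Rightarrow> nat \<Rightarrow> real) \<Rightarrow> nat \<Rightarrow> nat" where
  "w1 rank n psi j = (THE i. i < n \<and> (\<forall>i'<n. psi i' j \<le> psi i j) \<and>
      (\<forall>i'<n. (\<forall>k<n. psi k j \<le> psi i' j) \<longrightarrow> rank i \<le> rank i'))"

definition dset :: "(nat \<Rightarrow> nat) \<Rightarrow> nat \<Rightarrow> nat \<Rightarrow> (nat \<Rightarrow> nat \<Rightarrow> real) \<Rightarrow> nat \<Rightarrow> nat set" where
  "dset rank n m psi i = {j. j < m \<and> w1 rank n psi j = i}"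

definition max_other :: "nat \<Rightarrow> (nat \<Rightarrow> nat \<Rightarrow> real) \<Rightarrow> nat \<Rightarrow> nat \<Rightarrow> real" where
  "max_other n psi i' j = Max {psi i j | i. i < n \<and> i \<noteq> i'}"

definition Bval :: "nat \<Rightarrow> nat \<Rightarrow> (nat \<Rightarrow> nat \<Rightarrow> real) \<Rightarrow> real" where
  "Bval n m psi = Min {(\<Sum>j<m. max_other n psi i' j) | i'. i' < n}"

definition Btilde :: "nat \<Rightarrow> nat \<Rightarrow> (nat \<Rightarrow> nat \<Rightarrow> real) \<Rightarrow> nat \<Rightarrow> real" where
  "Btilde n m psi istar = (\<Sum>j<m. max_other n psi istar j)"

end

theory Submission
  imports Defs
begin

text \<open>Let \<open>M j = psi (w1 j) j\<close> be the top weight of type \<open>j\<close> and \<open>T = \<Sum>j. M j\<close>, so that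
  \<open>Btilde \<le> T\<close>. For a bidder \<open>i' \<noteq> i\<^sup>*\<close>, the sum \<open>\<Sum>j. max_other i' j\<close> dominates \<open>M j\<close> on
  every type not won by \<open>i'\<close>: both on the types outside \<open>d(i')\<close> and on \<open>d(i\<^sup>*)\<close>. As \<open>i\<^sup>*\<close>
  wins at least as much top weight as \<open>i'\<close>, twice that sum is at least \<open>T\<close>; for \<open>i' = i\<^sup>*\<close>
  the sum is \<open>Btilde\<close> itself.\<close>

lemma w1_maximal:
  assumes "0 < n" and "inj_on rank {..<n}"
  shows "w1 rank n psi j < n" and "\<And>i. i < n \<Longrightarrow> psi i j \<le> psi (w1 rank n psi j) j"
proof -
  let ?is_max = "\<lambda>i. i < n \<and> (\<forall>i'<n. psi i' j \<le> psi i j)"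
  obtain i0 where "i0 < n" "psi i0 j = Max ((\<lambda>i. psi i j) ` {..<n})"
    using Max_in[of "(\<lambda>i. psi i j) ` {..<n}"] \<open>0 < n\<close> by fastforce
  then have "?is_max i0" by simp
  then obtain i1 where i1: "?is_max i1" and least: "\<And>i. ?is_max i \<Longrightarrow> rank i1 \<le> rank i"
    using ex_has_least_nat[of ?is_max i0 rank] by blast
  have "w1 rank n psi j = i1"
    unfolding w1_def
  proof (rule the_equality)
    fix i
    assume "i < n \<and> (\<forall>i'<n. psi i' j \<le> psi i j) \<and>
      (\<forall>i'<n. (\<forall>k<n. psi k j \<le> psi i' j) \<longrightarrow> rank i \<le> rank i')"
    then have "i < n" "rank i = rank i1" using i1 least by (auto intro: le_antisym)
    then show "i = i1" using i1 assms(2) by (auto dest: inj_onD)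
  qed (use i1 least in blast)
  then show "w1 rank n psi j < n" "\<And>i. i < n \<Longrightarrow> psi i j \<le> psi (w1 rank n psi j) j"
    using i1 by auto
qed

lemma other_bidder_exists:
  fixes n i' :: nat
  assumes "2 \<le> n"
  obtains i where "i < n" "i \<noteq> i'"
  using assms that[of 0] that[of 1] by (cases "i' = 0") auto

lemma max_other_ge:
  "i < n \<Longrightarrow> i \<noteq> i' \<Longrightarrow> psi i j \<le> max_other n psi i' j"
  unfolding max_other_def by (rule Max_ge) auto

lemma max_other_le_w1:
  assumes "2 \<le> n" and "inj_on rank {..<n}"
  shows "max_other n psi i' j \<le> psi (w1 rank n psi j) j"
proof -
  obtain i where "i < n" "i \<noteq> i'" using other_bidder_exists[OF assms(1)] .
  then have "{psi i j | i. i < n \<and> i \<noteq> i'} \<noteq> {}" by blast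
  then show ?thesis
    unfolding max_other_def using w1_maximal(2)[where psi=psi and j=j] assms by (subst Max_le_iff) auto
qed

lemma max_other_nonneg:
  assumes "2 \<le> n" and "\<And>i. i < n \<Longrightarrow> 0 \<le> psi i j"
  shows "0 \<le> max_other n psi i' j"
proof -
  obtain i where "i < n" "i \<noteq> i'" using other_bidder_exists[OF assms(1)] .
  then show ?thesis using assms(2)[of i] max_other_ge[of i n i' psi j] by linarith
qed

lemma sum_dset_eq_top_weights:
  "(\<Sum>j\<in>dset rank n m psi i. psi i j) = (\<Sum>j\<in>dset rank n m psi i. psi (w1 rank n psi j) j)"
  unfolding dset_def by (rule sum.cong) auto

lemma top_weights_outside_dset_le_sum_max_other:
  assumes "2 \<le> n" and nonneg: "\<And>i j. i < n \<Longrightarrow> j < m \<Longrightarrow> 0 \<le> psi i j"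
    and "inj_on rank {..<n}"
    and "D \<subseteq> {..<m}" and "D \<inter> dset rank n m psi i' = {}"
  shows "(\<Sum>j\<in>D. psi (w1 rank n psi j) j) \<le> (\<Sum>j<m. max_other n psi i' j)"
proof -
  have "(\<Sum>j\<in>D. psi (w1 rank n psi j) j) \<le> (\<Sum>j\<in>D. max_other n psi i' j)"
  proof (rule sum_mono)
    fix j assume "j \<in> D"
    then have "w1 rank n psi j \<noteq> i'" using assms(4,5) by (auto simp: dset_def)
    then show "psi (w1 rank n psi j) j \<le> max_other n psi i' j"
      using max_other_ge w1_maximal(1) assms(1,3) by simp
  qed
  also have "\<dots> \<le> (\<Sum>j<m. max_other n psi i' j)"
    using assms(4) by (intro sum_mono2) (auto intro: max_other_nonneg[OF assms(1)] nonneg)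
  finally show ?thesis .
qed

lemma top_weights_le_twice_sum_max_other:
  assumes "2 \<le> n" and "\<And>i j. i < n \<Longrightarrow> j < m \<Longrightarrow> 0 \<le> psi i j"
    and "inj_on rank {..<n}"
    and "i' < n"
    and best: "(\<Sum>j\<in>dset rank n m psi i'. psi i' j) \<le> (\<Sum>j\<in>dset rank n m psi istar. psi istar j)"
    and "i' \<noteq> istar"
  shows "(\<Sum>j<m. psi (w1 rank n psi j) j) \<le> 2 * (\<Sum>j<m. max_other n psi i' j)"
proof -
  let ?top = "\<lambda>j. psi (w1 rank n psi j) j" and ?B = "\<Sum>j<m. max_other n psi i' j"
  let ?d = "dset rank n m psi"
  have d_sub: "?d i \<subseteq> {..<m}" for i by (auto simp: dset_def)
  have disj: "?d istar \<inter> ?d i' = {}" using \<open>i' \<noteq> istar\<close> by (auto simp: dset_def)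
  have "(\<Sum>j<m. ?top j) = (\<Sum>j\<in>?d i'. ?top j) + (\<Sum>j\<in>{..<m} - ?d i'. ?top j)"
    using sum.subset_diff[OF d_sub, of ?top i'] by (simp add: add.commute)
  also have "\<dots> \<le> (\<Sum>j\<in>?d istar. ?top j) + (\<Sum>j\<in>{..<m} - ?d i'. ?top j)"
    using best by (simp add: sum_dset_eq_top_weights)
  also have "\<dots> \<le> ?B + ?B"
    using d_sub disj
    by (intro add_mono top_weights_outside_dset_le_sum_max_other[OF assms(1-3)]) auto
  finally show ?thesis by simp
qed

theorem claim4:
  fixes n m :: nat and psi :: "nat \<Rightarrow> nat \<Rightarrow> real" and rank :: "nat \<Rightarrow> nat" and istar :: nat
  assumes "n \<ge> 2"
    and "\<And>i j. i < n \<Longrightarrow> j < m \<Longrightarrow> psi i j \<ge> 0"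
    and "inj_on rank {..<n}"
    and "istar < n"
    and "\<And>i. i < n \<Longrightarrow>
           (\<Sum>j\<in>dset rank n m psi i. psi i j) \<le> (\<Sum>j\<in>dset rank n m psi istar. psi istar j)"
  shows "Btilde n m psi istar / 2 \<le> Bval n m psi \<and> Bval n m psi \<le> Btilde n m psi istar"
proof -
  let ?sums = "{(\<Sum>j<m. max_other n psi i' j) | i'. i' < n}"
  have Btilde_in: "Btilde n m psi istar \<in> ?sums" unfolding Btilde_def using assms(4) by auto
  have Btilde_nonneg: "0 \<le> Btilde n m psi istar"
    unfolding Btilde_def using assms(1,2) by (intro sum_nonneg max_other_nonneg) auto
  have Btilde_le_top: "Btilde n m psi istar \<le> (\<Sum>j<m. psi (w1 rank n psi j) j)"
    unfolding Btilde_def using max_other_le_w1[OF assms(1,3)] by (rule sum_mono)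
  have "Btilde n m psi istar / 2 \<le> (\<Sum>j<m. max_other n psi i' j)" if "i' < n" for i'
  proof (cases "i' = istar")
    case True then show ?thesis using Btilde_nonneg by (simp add: Btilde_def)
  next
    case False
    then show ?thesis
      using top_weights_le_twice_sum_max_other[OF assms(1-3) that assms(5)[OF that]] Btilde_le_top
      by linarith
  qed
  then have "Btilde n m psi istar / 2 \<le> Min ?sums"
    using Btilde_in by (subst Min_ge_iff) auto
  moreover have "Min ?sums \<le> Btilde n m psi istar"
    using Btilde_in by (intro Min_le) auto
  ultimately show ?thesis unfolding Bval_def by simp
qed

end
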